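(* At every point of the set $\mathcal{RS}\cap\{1-Z_1\ge0\}\cap\{F_2=0\}\cap\{Z_2-Z_3\ge0\}\cap\{X_1\ge0\}$ (with $Z_1>0$, so that $F_2$ is defined) one has $\langle\nabla F_2,V\rangle\ge0$.
   Context: Fix an integer $m\ge1$, $n=4m+3$ and $\epsilon\in\{0,1\}$. On $\mathbb R^8$ with coordinates $(X_1,X_2,X_3,Z_1,Z_2,Z_3,Z_4,W)$ set $G=X_1^2+2X_2^2+4mX_3^2$, $H=X_1+2X_2+4mX_3$, $R_1=2Z_1Z_2+4mZ_1Z_3$, $R_2=4Z_2-2Z_1Z_2+4mZ_3$, $R_3=(4m+8)Z_4-2Z_1Z_3-4Z_3$, $R_s=R_1+2R_2+4mR_3$, $Q=G+R_s+(n-1)\frac\epsilon2W-1$. $V$ is the vector field with components $V_{X_i}=X_i(G-\frac\epsilon2W-1)+R_i+\frac\epsilon2W$ ($i=1,2,3$), $V_{Z_1}=2Z_1(X_1-X_2)$, $V_{Z_2}=2Z_2(G-\frac\epsilon2W-X_2)$, $V_{Z_3}=2Z_3(G-\frac\epsilon2W+X_2-2X_3)$, $V_{Z_4}=2Z_4(G-\frac\epsilon2W-X_3)$, $V_W=2W(G-\frac\epsilon2W)$. $\mathcal{RS}=\{Q\le0\}\cap\{H\le1\}\cap\{W\ge0\}\cap\{Z_1,Z_2,Z_3,Z_4\ge0\}\cap\{Z_4^2=Z_2Z_3\}$. For a constant $l$ and $Z_1>0$, $F_l=X_2-X_1+l\left(\sqrt{Z_2/Z_1}-\sqrt{Z_1Z_2}\right)$.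 *)

theory Defs
  imports "HOL-Analysis.Analysis"
begin

definition nn :: "nat \<Rightarrow> real" where "nn m = 4 * real m + 3"

definition GG :: "nat \<Rightarrow> real \<Rightarrow> real \<Rightarrow> real \<Rightarrow> real" where
  "GG m x1 x2 x3 = x1^2 + 2 * x2^2 + 4 * real m * x3^2"

definition HH :: "nat \<Rightarrow> real \<Rightarrow> real \<Rightarrow> real \<Rightarrow> real" where
  "HH m x1 x2 x3 = x1 + 2 * x2 + 4 * real m * x3"

definition R1 :: "nat \<Rightarrow> real \<Rightarrow> real \<Rightarrow> real \<Rightarrow> real \<Rightarrow> real" where
  "R1 m z1 z2 z3 z4 = 2 * z1 * z2 + 4 * real m * z1 * z3"

definition R2 :: "nat \<Rightarrow> real \<Rightarrow> real \<Rightarrow> real \<Rightarrow> real \<Rightarrow> real" where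
  "R2 m z1 z2 z3 z4 = 4 * z2 - 2 * z1 * z2 + 4 * real m * z3"

definition R3 :: "nat \<Rightarrow> real \<Rightarrow> real \<Rightarrow> real \<Rightarrow> real \<Rightarrow> real" where
  "R3 m z1 z2 z3 z4 = (4 * real m + 8) * z4 - 2 * z1 * z3 - 4 * z3"

definition Rs :: "nat \<Rightarrow> real \<Rightarrow> real \<Rightarrow> real \<Rightarrow> real \<Rightarrow> real" where
  "Rs m z1 z2 z3 z4 = R1 m z1 z2 z3 z4 + 2 * R2 m z1 z2 z3 z4 + 4 * real m * R3 m z1 z2 z3 z4"

definition QQ :: "nat \<Rightarrow> real \<Rightarrow> real \<Rightarrow> real \<Rightarrow> real \<Rightarrow> real \<Rightarrow> real \<Rightarrow> real \<Rightarrow> real \<Rightarrow> real \<Rightarrow> real" where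
  "QQ m eps x1 x2 x3 z1 z2 z3 z4 w =
     GG m x1 x2 x3 + Rs m z1 z2 z3 z4 + (nn m - 1) * (eps / 2) * w - 1"

definition VX1 :: "nat \<Rightarrow> real \<Rightarrow> real \<Rightarrow> real \<Rightarrow> real \<Rightarrow> real \<Rightarrow> real \<Rightarrow> real \<Rightarrow> real \<Rightarrow> real \<Rightarrow> real" where
  "VX1 m eps x1 x2 x3 z1 z2 z3 z4 w =
     x1 * (GG m x1 x2 x3 - eps / 2 * w - 1) + R1 m z1 z2 z3 z4 + eps / 2 * w"

definition VX2 :: "nat \<Rightarrow> real \<Rightarrow> real \<Rightarrow> real \<Rightarrow> real \<Rightarrow> real \<Rightarrow> real \<Rightarrow> real \<Rightarrow> real \<Rightarrow> real \<Rightarrow> real" where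
  "VX2 m eps x1 x2 x3 z1 z2 z3 z4 w =
     x2 * (GG m x1 x2 x3 - eps / 2 * w - 1) + R2 m z1 z2 z3 z4 + eps / 2 * w"

definition VX3 :: "nat \<Rightarrow> real \<Rightarrow> real \<Rightarrow> real \<Rightarrow> real \<Rightarrow> real \<Rightarrow> real \<Rightarrow> real \<Rightarrow> real \<Rightarrow> real \<Rightarrow> real" where
  "VX3 m eps x1 x2 x3 z1 z2 z3 z4 w =
     x3 * (GG m x1 x2 x3 - eps / 2 * w - 1) + R3 m z1 z2 z3 z4 + eps / 2 * w"

definition VZ1 :: "nat \<Rightarrow> real \<Rightarrow> real \<Rightarrow> real \<Rightarrow> real \<Rightarrow> real \<Rightarrow> real \<Rightarrow> real \<Rightarrow> real \<Rightarrow> real \<Rightarrow> real" where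
  "VZ1 m eps x1 x2 x3 z1 z2 z3 z4 w = 2 * z1 * (x1 - x2)"

definition VZ2 :: "nat \<Rightarrow> real \<Rightarrow> real \<Rightarrow> real \<Rightarrow> real \<Rightarrow> real \<Rightarrow> real \<Rightarrow> real \<Rightarrow> real \<Rightarrow> real \<Rightarrow> real" where
  "VZ2 m eps x1 x2 x3 z1 z2 z3 z4 w = 2 * z2 * (GG m x1 x2 x3 - eps / 2 * w - x2)"

definition VZ3 :: "nat \<Rightarrow> real \<Rightarrow> real \<Rightarrow> real \<Rightarrow> real \<Rightarrow> real \<Rightarrow> real \<Rightarrow> real \<Rightarrow> real \<Rightarrow> real \<Rightarrow> real" where
  "VZ3 m eps x1 x2 x3 z1 z2 z3 z4 w = 2 * z3 * (GG m x1 x2 x3 - eps / 2 * w + x2 - 2 * x3)"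

definition VZ4 :: "nat \<Rightarrow> real \<Rightarrow> real \<Rightarrow> real \<Rightarrow> real \<Rightarrow> real \<Rightarrow> real \<Rightarrow> real \<Rightarrow> real \<Rightarrow> real \<Rightarrow> real" where
  "VZ4 m eps x1 x2 x3 z1 z2 z3 z4 w = 2 * z4 * (GG m x1 x2 x3 - eps / 2 * w - x3)"

definition VW :: "nat \<Rightarrow> real \<Rightarrow> real \<Rightarrow> real \<Rightarrow> real \<Rightarrow> real \<Rightarrow> real \<Rightarrow> real \<Rightarrow> real \<Rightarrow> real \<Rightarrow> real" where
  "VW m eps x1 x2 x3 z1 z2 z3 z4 w = 2 * w * (GG m x1 x2 x3 - eps / 2 * w)"

definition RS :: "nat \<Rightarrow> real \<Rightarrow> real \<Rightarrow> real \<Rightarrow> real \<Rightarrow> real \<Rightarrow> real \<Rightarrow> real \<Rightarrow> real \<Rightarrow> real \<Rightarrow> bool" where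
  "RS m eps x1 x2 x3 z1 z2 z3 z4 w \<longleftrightarrow>
     QQ m eps x1 x2 x3 z1 z2 z3 z4 w \<le> 0 \<and> HH m x1 x2 x3 \<le> 1 \<and> w \<ge> 0 \<and>
     z1 \<ge> 0 \<and> z2 \<ge> 0 \<and> z3 \<ge> 0 \<and> z4 \<ge> 0 \<and> z4^2 = z2 * z3"

text \<open>F_l (depends only on X1, X2, Z1, Z2; meaningful for Z1 > 0).\<close>

definition FF :: "real \<Rightarrow> real \<Rightarrow> real \<Rightarrow> real \<Rightarrow> real \<Rightarrow> real" where
  "FF l x1 x2 z1 z2 = x2 - x1 + l * (sqrt (z2 / z1) - sqrt (z1 * z2))"

text \<open>Derivative of F_l along V at a point: derivative at t = 0 of F_l along the line p + t V(p).
  Where F_l is differentiable this is exactly the inner product of grad F_l with V.\<close>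

definition FF_along_V :: "real \<Rightarrow> nat \<Rightarrow> real \<Rightarrow> real \<Rightarrow> real \<Rightarrow> real \<Rightarrow> real \<Rightarrow> real \<Rightarrow> real \<Rightarrow> real \<Rightarrow> real \<Rightarrow> real \<Rightarrow> real" where
  "FF_along_V l m eps x1 x2 x3 z1 z2 z3 z4 w t =
     FF l (x1 + t * VX1 m eps x1 x2 x3 z1 z2 z3 z4 w)
          (x2 + t * VX2 m eps x1 x2 x3 z1 z2 z3 z4 w)
          (z1 + t * VZ1 m eps x1 x2 x3 z1 z2 z3 z4 w)
          (z2 + t * VZ2 m eps x1 x2 x3 z1 z2 z3 z4 w)"

end

theory Submission
  imports Defs
begin

(* Write z1 = a^2 and z2 = u^2. Along V the coordinates Z1 and Z2 have logarithmic derivatives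
   2(X1 - X2) and 2(G - eps W/2 - X2), so the derivative of F_2 along V is a polynomial in
   a^-1, a, u and the other coordinates; on the level set F_2 = 0, i.e. x2 - x1 = 2u(a - 1/a),
   all terms in G cancel and it factors as (1 - a^2)/a * (2u(1 - x1 - 2au) + 4amz3).
   The first factor is nonnegative because z1 <= 1. For the second, z4^2 = z2 z3 >= z3^2 gives
   z3 <= z4, so Q <= 0 yields x1^2 + 2x2^2 + 8z2 - 2z1z2 <= 1; on F_2 = 0 the left-hand side
   equals (x1 + 2au)^2 + 2(x1 + au - 2u/a)^2, hence x1 + 2au <= 1. *)

lemma sqrt_quotient_line_has_real_derivative:
  fixes a u :: real
  assumes "a > 0" "u > 0"
  shows "((\<lambda>t. sqrt ((u\<^sup>2 + t * w2) / (a\<^sup>2 + t * w1))) has_real_derivative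
           (w2 / u\<^sup>2 - w1 / a\<^sup>2) * (u / a) / 2) (at 0)"
proof -
  have sqrt_at_0: "sqrt (u\<^sup>2 / a\<^sup>2) = u / a"
    using assms by (simp add: real_sqrt_divide)
  show ?thesis
    using assms by (auto intro!: derivative_eq_intros simp: sqrt_at_0)
      (simp_all add: field_simps power2_eq_square power4_eq_xxxx)
qed

lemma sqrt_product_line_has_real_derivative:
  fixes a u :: real
  assumes "a > 0" "u > 0"
  shows "((\<lambda>t. sqrt ((a\<^sup>2 + t * w1) * (u\<^sup>2 + t * w2))) has_real_derivative
           (w1 / a\<^sup>2 + w2 / u\<^sup>2) * (a * u) / 2) (at 0)"
proof -
  have sqrt_at_0: "sqrt (a\<^sup>2 * u\<^sup>2) = a * u"
    using assms by (simp add: real_sqrt_mult)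
  show ?thesis
    using assms by (auto intro!: derivative_eq_intros simp: sqrt_at_0 mult_less_0_iff)
      (simp_all add: field_simps power2_eq_square)
qed

lemma FF_line_has_real_derivative:
  fixes a u :: real
  assumes "a > 0" "u > 0"
  shows "((\<lambda>t. FF l (x1 + t * v1) (x2 + t * v2) (a\<^sup>2 + t * w1) (u\<^sup>2 + t * w2))
      has_real_derivative
        v2 - v1 + l / 2 * ((w2 / u\<^sup>2 - w1 / a\<^sup>2) * (u / a) - (w1 / a\<^sup>2 + w2 / u\<^sup>2) * (a * u))) (at 0)"
proof -
  have "((\<lambda>t. (x2 + t * v2) - (x1 + t * v1)) has_real_derivative v2 - v1) (at 0)"
    by (auto intro!: derivative_eq_intros)
  from DERIV_add[OF this DERIV_cmult[OF DERIV_diff[OF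
        sqrt_quotient_line_has_real_derivative[OF assms]
        sqrt_product_line_has_real_derivative[OF assms]]]]
  show ?thesis
    unfolding FF_def by (rule DERIV_cong) (use assms in \<open>simp add: field_simps\<close>)
qed

lemma FF_at_squares:
  assumes "a > 0" "u \<ge> 0"
  shows "FF l x1 x2 (a\<^sup>2) (u\<^sup>2) = x2 - x1 + l * (u / a - a * u)"
  using assms by (simp add: FF_def real_sqrt_divide real_sqrt_mult)

lemma VX2_minus_VX1:
  "VX2 m eps x1 x2 x3 z1 z2 z3 z4 w - VX1 m eps x1 x2 x3 z1 z2 z3 z4 w
     = (x2 - x1) * (GG m x1 x2 x3 - eps / 2 * w - 1) + 4 * (1 - z1) * (z2 + real m * z3)"
  by (simp add: VX1_def VX2_def R1_def R2_def field_simps)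

lemma FF_along_V_has_real_derivative:
  fixes m :: nat and eps x1 x2 x3 w a u :: real
  defines "G \<equiv> GG m x1 x2 x3 - eps / 2 * w"
  assumes "a > 0" "u \<ge> 0"
  shows "(FF_along_V l m eps x1 x2 x3 (a\<^sup>2) (u\<^sup>2) z3 z4 w has_real_derivative
      (x2 - x1) * (G - 1) + 4 * (1 - a\<^sup>2) * (u\<^sup>2 + real m * z3)
        + l * ((G - x1) * (u / a) - (G + x1 - 2 * x2) * (a * u))) (at 0)"
proof (cases "u = 0")
  case True
  then show ?thesis
    unfolding FF_along_V_def FF_def VZ2_def
    by (auto intro!: derivative_eq_intros simp: VX2_minus_VX1 G_def algebra_simps)
next
  case False
  with assms have "u > 0" by simp
  have log_derivatives: "VZ1 m eps x1 x2 x3 (a\<^sup>2) (u\<^sup>2) z3 z4 w / a\<^sup>2 = 2 * (x1 - x2)"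
       "VZ2 m eps x1 x2 x3 (a\<^sup>2) (u\<^sup>2) z3 z4 w / u\<^sup>2 = 2 * (G - x2)"
    using \<open>a > 0\<close> \<open>u > 0\<close> by (simp_all add: VZ1_def VZ2_def G_def)
  show ?thesis
    unfolding FF_along_V_def
    by (rule DERIV_cong[OF FF_line_has_real_derivative[OF \<open>a > 0\<close> \<open>u > 0\<close>]])
      (simp add: log_derivatives VX2_minus_VX1 G_def algebra_simps)
qed

lemma Rs_lower_bound:
  assumes "z1 \<le> 1" "0 \<le> z3" "z3 \<le> z2" "0 \<le> z4" "z4\<^sup>2 = z2 * z3"
  shows "8 * z2 - 2 * z1 * z2 \<le> Rs m z1 z2 z3 z4"
proof -
  have "z3\<^sup>2 \<le> z4\<^sup>2"
    using assms by (simp add: power2_eq_square mult_right_mono)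
  then have "z3 \<le> z4"
    using \<open>0 \<le> z4\<close> by (rule power2_le_imp_le)
  have "4 * real m * (z1 + 2) * z3 \<le> 4 * real m * (4 * real m + 8) * z3"
    using assms by (intro mult_right_mono mult_left_mono) auto
  also have "\<dots> \<le> 4 * real m * (4 * real m + 8) * z4"
    using \<open>z3 \<le> z4\<close> by (intro mult_left_mono) auto
  finally show ?thesis
    by (simp add: Rs_def R1_def R2_def R3_def algebra_simps)
qed

lemma RS_quadratic_bound:
  assumes "RS m eps x1 x2 x3 z1 z2 z3 z4 w" "eps \<ge> 0" "z1 \<le> 1" "z3 \<le> z2"
  shows "x1\<^sup>2 + 2 * x2\<^sup>2 + 8 * z2 - 2 * z1 * z2 \<le> 1"
proof -
  have "8 * z2 - 2 * z1 * z2 \<le> Rs m z1 z2 z3 z4"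
    using assms by (intro Rs_lower_bound) (auto simp: RS_def)
  moreover have "x1\<^sup>2 + 2 * x2\<^sup>2 \<le> GG m x1 x2 x3"
    by (simp add: GG_def)
  moreover have "0 \<le> (nn m - 1) * (eps / 2) * w"
    using assms by (auto simp: RS_def nn_def)
  ultimately show ?thesis
    using assms by (auto simp: RS_def QQ_def)
qed

lemma sum_le_one_on_FF2_zero_level:
  fixes a u x1 x2 :: real
  assumes "a > 0" "x2 - x1 + 2 * (u / a - a * u) = 0"
    and "x1\<^sup>2 + 2 * x2\<^sup>2 + 8 * u\<^sup>2 - 2 * a\<^sup>2 * u\<^sup>2 \<le> 1"
  shows "x1 + 2 * a * u \<le> 1"
proof -
  have x2_eq: "x2 = x1 - 2 * (u / a - a * u)"
    using assms(2) by simp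
  have "x1\<^sup>2 + 2 * x2\<^sup>2 + 8 * u\<^sup>2 - 2 * a\<^sup>2 * u\<^sup>2
          = (x1 + 2 * a * u)\<^sup>2 + 2 * (x1 + a * u - 2 * u / a)\<^sup>2"
    unfolding x2_eq using assms(1) by (simp add: field_simps power2_eq_square)
  with assms(3) have "(x1 + 2 * a * u)\<^sup>2 \<le> 1"
    using zero_le_power2[of "x1 + a * u - 2 * u / a"] by linarith
  then show ?thesis
    using power2_le_imp_le[of "x1 + 2 * a * u" 1] by simp
qed

lemma FF2_derivative_on_zero_level:
  fixes a u x1 x2 G M z3 :: real
  assumes "a > 0" "x2 - x1 + 2 * (u / a - a * u) = 0"
  shows "(x2 - x1) * (G - 1) + 4 * (1 - a\<^sup>2) * (u\<^sup>2 + M * z3)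
           + 2 * ((G - x1) * (u / a) - (G + x1 - 2 * x2) * (a * u))
         = (1 - a\<^sup>2) / a * (2 * u * (1 - x1 - 2 * a * u) + 4 * a * M * z3)"
proof -
  have x2_eq: "x2 = x1 - 2 * (u / a - a * u)"
    using assms(2) by simp
  show ?thesis
    unfolding x2_eq using assms(1) by (simp add: field_simps power2_eq_square)
qed

theorem proposition4p1:
  fixes m :: nat and eps x1 x2 x3 z1 z2 z3 z4 w :: real
  assumes "m \<ge> 1" and "eps \<in> {0, 1}"
    and "RS m eps x1 x2 x3 z1 z2 z3 z4 w"
    and "1 - z1 \<ge> 0" and "z1 > 0"
    and "FF 2 x1 x2 z1 z2 = 0"
    and "z2 - z3 \<ge> 0" and "x1 \<ge> 0"
  shows "\<exists>D. (FF_along_V 2 m eps x1 x2 x3 z1 z2 z3 z4 w has_real_derivative D) (at 0) \<and> D \<ge> 0"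
proof -
  define a u where "a = sqrt z1" and "u = sqrt z2"
  have "z2 \<ge> 0"
    using assms(3) by (simp add: RS_def)
  then have a: "a > 0" "z1 = a\<^sup>2" "a\<^sup>2 \<le> 1" and u: "u \<ge> 0" "z2 = u\<^sup>2"
    using assms(4,5) by (simp_all add: a_def u_def)
  have level: "x2 - x1 + 2 * (u / a - a * u) = 0"
    using assms(6) FF_at_squares[OF a(1) u(1)] a u by simp
  have "x1 + 2 * a * u \<le> 1"
    using RS_quadratic_bound[OF assms(3)] assms(2,4,7) a u
    by (intro sum_le_one_on_FF2_zero_level[OF a(1) level]) auto
  moreover have "(1 - a\<^sup>2) / a \<ge> 0" "z3 \<ge> 0"
    using a assms(3) by (auto simp: RS_def)
  ultimately have "(1 - a\<^sup>2) / a * (2 * u * (1 - x1 - 2 * a * u) + 4 * a * real m * z3) \<ge> 0"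
    using a(1) u(1) by (intro mult_nonneg_nonneg add_nonneg_nonneg) auto
  moreover have "(FF_along_V 2 m eps x1 x2 x3 z1 z2 z3 z4 w has_real_derivative
      (1 - a\<^sup>2) / a * (2 * u * (1 - x1 - 2 * a * u) + 4 * a * real m * z3)) (at 0)"
    using FF_along_V_has_real_derivative[OF a(1) u(1), of 2 m eps x1 x2 x3 z3 z4 w]
    unfolding FF2_derivative_on_zero_level[OF a(1) level] a(2) u(2) .
  ultimately show ?thesis
    by blast
qed

end
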